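(* Let $\mathcal{N}$ be a nest in a complex Hilbert space $H$ with $\dim H\ge 2$, and let $\mathcal{A}=\mathcal{T}(\mathcal{N})$ be the associated nest algebra. Then $\operatorname{JCent}(\mathcal{A})=\operatorname{Cent}(\mathcal{A})$.
   Context: A nest is a chain $\mathcal{N}$ of closed subspaces of $H$ containing $\{0\}$ and $H$, closed under arbitrary intersections and closed linear spans. The nest algebra is $\mathcal{T}(\mathcal{N})=\{T\in\mathcal{B}(H): T(N)\subseteq N \text{ for all } N\in\mathcal{N}\}$, where $\mathcal{B}(H)$ is the algebra of bounded operators on $H$. $x\circ y=xy+yx$. $\operatorname{JCent}(\mathcal{A})$: linear $f:\mathcal{A}\to\mathcal{A}$ with $f(x\circ y)=f(x)\circ y$ for all $x,y$. $\operatorname{Cent}(\mathcal{A})$: linear $f$ with $f(xy)=f(x)y=xf(y)$ for all $x,y$. *)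

theory Defs
  imports "HOL-Analysis.Analysis"
begin

text \<open>A complex Hilbert space is modelled as a real Hilbert space (type class
  real_inner + complete_space, whose inner product is the real part of the complex
  one) together with a complex structure J (multiplication by the imaginary unit):
  J is real-linear, J (J x) = - x, and J is orthogonal.\<close>

definition complex_structure :: "('a::real_inner \<Rightarrow> 'a) \<Rightarrow> bool" where
  "complex_structure J \<longleftrightarrow> linear J \<and> (\<forall>x. J (J x) = - x) \<and> (\<forall>x y. inner (J x) (J y) = inner x y)"

definition cscale :: "('a::real_vector \<Rightarrow> 'a) \<Rightarrow> complex \<Rightarrow> 'a \<Rightarrow> 'a" where
  "cscale J c x = Re c *\<^sub>R x + Im c *\<^sub>R J x"

definition cdim_ge_2 :: "('a::real_vector \<Rightarrow> 'a) \<Rightarrow> bool" where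
  "cdim_ge_2 J \<longleftrightarrow> (\<exists>x y. \<forall>a b. cscale J a x + cscale J b y = 0 \<longrightarrow> a = 0 \<and> b = 0)"

definition csubspace :: "('a::real_vector \<Rightarrow> 'a) \<Rightarrow> 'a set \<Rightarrow> bool" where
  "csubspace J M \<longleftrightarrow> subspace M \<and> (\<forall>x\<in>M. J x \<in> M)"

definition cspan :: "('a::real_vector \<Rightarrow> 'a) \<Rightarrow> 'a set \<Rightarrow> 'a set" where
  "cspan J X = \<Inter>{M. csubspace J M \<and> X \<subseteq> M}"

definition nest :: "('a::real_normed_vector \<Rightarrow> 'a) \<Rightarrow> 'a set set \<Rightarrow> bool" where
  "nest J \<N> \<longleftrightarrow>
     (\<forall>M\<in>\<N>. closed M \<and> csubspace J M) \<and>
     {0} \<in> \<N> \<and> UNIV \<in> \<N> \<and>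
     (\<forall>M\<in>\<N>. \<forall>L\<in>\<N>. M \<subseteq> L \<or> L \<subseteq> M) \<and>
     (\<forall>S\<subseteq>\<N>. \<Inter>S \<in> \<N>) \<and>
     (\<forall>S\<subseteq>\<N>. closure (cspan J (\<Union>S)) \<in> \<N>)"

text \<open>B(H): bounded complex-linear operators on H (real bounded linear maps commuting with J).\<close>
definition bops :: "('a::real_normed_vector \<Rightarrow> 'a) \<Rightarrow> ('a \<Rightarrow> 'a) set" where
  "bops J = {T. bounded_linear T \<and> (\<forall>x. T (J x) = J (T x))}"

definition nest_algebra :: "('a::real_normed_vector \<Rightarrow> 'a) \<Rightarrow> 'a set set \<Rightarrow> ('a \<Rightarrow> 'a) set" where
  "nest_algebra J \<N> = {T \<in> bops J. \<forall>N\<in>\<N>. T ` N \<subseteq> N}"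

definition opscale :: "('a::real_vector \<Rightarrow> 'a) \<Rightarrow> complex \<Rightarrow> ('a \<Rightarrow> 'a) \<Rightarrow> ('a \<Rightarrow> 'a)" where
  "opscale J c T = (\<lambda>v. cscale J c (T v))"

definition jprod :: "('a \<Rightarrow> 'a) \<Rightarrow> ('a \<Rightarrow> 'a) \<Rightarrow> ('a::plus \<Rightarrow> 'a)" where
  "jprod x y = (\<lambda>v. x (y v) + y (x v))"

definition alg_clinear :: "('a::real_vector \<Rightarrow> 'a) \<Rightarrow> ('a \<Rightarrow> 'a) set \<Rightarrow> (('a \<Rightarrow> 'a) \<Rightarrow> ('a \<Rightarrow> 'a)) \<Rightarrow> bool" where
  "alg_clinear J A f \<longleftrightarrow> (\<forall>x\<in>A. f x \<in> A) \<and>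
     (\<forall>x\<in>A. \<forall>y\<in>A. f (\<lambda>v. x v + y v) = (\<lambda>v. f x v + f y v)) \<and>
     (\<forall>c. \<forall>x\<in>A. f (opscale J c x) = opscale J c (f x))"

definition JCent :: "('a::real_vector \<Rightarrow> 'a) \<Rightarrow> ('a \<Rightarrow> 'a) set \<Rightarrow> (('a \<Rightarrow> 'a) \<Rightarrow> ('a \<Rightarrow> 'a)) set" where
  "JCent J A = {f. alg_clinear J A f \<and> (\<forall>x\<in>A. \<forall>y\<in>A. f (jprod x y) = jprod (f x) y)}"

definition Cent :: "('a::real_vector \<Rightarrow> 'a) \<Rightarrow> ('a \<Rightarrow> 'a) set \<Rightarrow> (('a \<Rightarrow> 'a) \<Rightarrow> ('a \<Rightarrow> 'a)) set" where
  "Cent J A = {f. alg_clinear J A f \<and> (\<forall>x\<in>A. \<forall>y\<in>A. f (x \<circ> y) = f x \<circ> y \<and> f (x \<circ> y) = x \<circ> f y)}"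

end

theory Submission
  imports Defs
begin

text \<open>
  Let f be a Jordan centralizer of a unital operator algebra A and a = f(1). Then
  2 f(y) = a y + y a, and expanding f(x y + y x) = f(x) y + y f(x) shows that every
  commutator [a, y] commutes with all of A. In a nest algebra the centre consists of scalars:
  a central operator commutes with the rank-one operators u \<otimes> w for u \<in> N and w \<bottom> N,
  N in the nest, which forces a single eigenvalue on N, and with the orthogonal projection
  onto N, which carries this over to the orthogonal complement. Hence [a, y] = \<lambda> and
  [a, y y] = 2 \<lambda> y are scalars; so either \<lambda> = 0 or y itself is a scalar, and in both cases
  a commutes with y. Therefore f(y) = a y, and f is a centralizer.
\<close>

lemma parallelogram_law:
  fixes x y :: "'a::real_inner"
  shows "(norm (x + y))\<^sup>2 + (norm (x - y))\<^sup>2 = 2 * (norm x)\<^sup>2 + 2 * (norm y)\<^sup>2"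
  by (simp add: power2_norm_eq_inner inner_add_left inner_add_right inner_diff_left
      inner_diff_right inner_commute)

lemma Cauchy_minimizing_sequence:
  fixes S :: "'a::real_inner set"
  assumes "convex S" and X_in: "\<And>n. X n \<in> S"
    and minimizing: "(\<lambda>n. dist v (X n)) \<longlonglongrightarrow> infdist v S"
  shows "Cauchy X"
proof (rule metric_CauchyI)
  define d where "d = infdist v S"
  have d_le: "d \<le> dist v x" if "x \<in> S" for x
    using infdist_le[OF that] by (simp add: d_def)
  have excess_bound:
    "(dist (X m) (X n))\<^sup>2 \<le> 2 * ((dist v (X m))\<^sup>2 - d\<^sup>2) + 2 * ((dist v (X n))\<^sup>2 - d\<^sup>2)"
    for m n
  proof -
    have "(1/2) *\<^sub>R X m + (1/2) *\<^sub>R X n \<in> S"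
      using \<open>convex S\<close> X_in by (simp add: convexD)
    moreover have "v - ((1/2) *\<^sub>R X m + (1/2) *\<^sub>R X n) = (1/2) *\<^sub>R ((v - X m) + (v - X n))"
      by (simp add: algebra_simps flip: scaleR_2)
    ultimately have "2 * d \<le> norm ((v - X m) + (v - X n))"
      using d_le[of "(1/2) *\<^sub>R X m + (1/2) *\<^sub>R X n"] by (simp add: dist_norm)
    then have "(2 * d)\<^sup>2 \<le> (norm ((v - X m) + (v - X n)))\<^sup>2"
      using infdist_nonneg[of v S] unfolding d_def by (intro power_mono) auto
    moreover have "(norm ((v - X m) + (v - X n)))\<^sup>2 + (dist (X m) (X n))\<^sup>2
        = 2 * (dist v (X m))\<^sup>2 + 2 * (dist v (X n))\<^sup>2"
      using parallelogram_law[of "v - X m" "v - X n"] by (simp add: dist_norm norm_minus_commute)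
    ultimately show ?thesis by (simp add: power_mult_distrib)
  qed
  have excess_to_0: "(\<lambda>n. (dist v (X n))\<^sup>2 - d\<^sup>2) \<longlonglongrightarrow> 0"
    using tendsto_diff[OF tendsto_power[OF minimizing, of 2] tendsto_const[of "d\<^sup>2"]]
    by (simp add: d_def)
  fix e :: real assume "0 < e"
  then have "\<forall>\<^sub>F n in sequentially. (dist v (X n))\<^sup>2 - d\<^sup>2 < e\<^sup>2 / 4"
    using order_tendstoD(2)[OF excess_to_0, of "e\<^sup>2 / 4"] by simp
  then obtain M where M: "\<And>n. n \<ge> M \<Longrightarrow> (dist v (X n))\<^sup>2 - d\<^sup>2 < e\<^sup>2 / 4"
    by (auto simp: eventually_sequentially)
  have "dist (X m) (X n) < e" if "m \<ge> M" "n \<ge> M" for m n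
  proof -
    have "(dist (X m) (X n))\<^sup>2 < e\<^sup>2"
      using excess_bound[of m n] M[OF that(1)] M[OF that(2)] by argo
    then show ?thesis
      using \<open>0 < e\<close> by (simp add: power_less_imp_less_base)
  qed
  then show "\<exists>M. \<forall>m\<ge>M. \<forall>n\<ge>M. dist (X m) (X n) < e" by blast
qed

lemma nearest_point_exists:
  fixes S :: "'a::{real_inner,complete_space} set"
  assumes "closed S" "convex S" "S \<noteq> {}"
  shows "\<exists>p\<in>S. \<forall>x\<in>S. dist v p \<le> dist v x"
proof -
  have "\<exists>x\<in>S. dist v x < infdist v S + 1 / Suc n" for n :: nat
  proof -
    have "(INF x\<in>S. dist v x) < infdist v S + 1 / Suc n"
      using infdist_notempty[OF \<open>S \<noteq> {}\<close>] by simp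
    then show ?thesis
      by (subst (asm) cINF_less_iff) (use \<open>S \<noteq> {}\<close> in \<open>auto intro: bdd_belowI[of _ 0]\<close>)
  qed
  then obtain X where X_in: "\<And>n. X n \<in> S"
    and X_near: "\<And>n. dist v (X n) < infdist v S + 1 / Suc n"
    by metis
  have minimizing: "(\<lambda>n. dist v (X n)) \<longlonglongrightarrow> infdist v S"
  proof (rule tendsto_sandwich)
    show "\<forall>\<^sub>F n in sequentially. infdist v S \<le> dist v (X n)"
      using infdist_le[OF X_in] by simp
    show "\<forall>\<^sub>F n in sequentially. dist v (X n) \<le> infdist v S + 1 / Suc n"
      using X_near by (simp add: less_imp_le)
    show "(\<lambda>n. infdist v S + 1 / Suc n) \<longlonglongrightarrow> infdist v S"
      using tendsto_add[OF tendsto_const LIMSEQ_Suc[OF lim_1_over_n]] by simp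
  qed simp
  obtain p where "X \<longlonglongrightarrow> p"
    using Cauchy_minimizing_sequence[OF \<open>convex S\<close> X_in minimizing] Cauchy_convergent convergent_def
    by blast
  have "p \<in> S"
    using closed_sequentially[OF \<open>closed S\<close> X_in \<open>X \<longlonglongrightarrow> p\<close>] .
  moreover have "dist v p = infdist v S"
    using LIMSEQ_unique[OF tendsto_dist[OF tendsto_const \<open>X \<longlonglongrightarrow> p\<close>] minimizing] .
  ultimately show ?thesis
    using infdist_le[of _ S v] by metis
qed

lemma nearest_point_orthogonal:
  fixes S :: "'a::real_inner set"
  assumes "subspace S" "p \<in> S" and nearest: "\<And>x. x \<in> S \<Longrightarrow> dist v p \<le> dist v x"
  shows "v - p \<in> S\<^sup>\<bottom>"
  unfolding orthogonal_comp_def orthogonal_def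
proof (intro CollectI ballI)
  fix y assume "y \<in> S"
  show "inner y (v - p) = 0"
  proof (cases "y = 0")
    case False
    define t where "t = inner (v - p) y / inner y y"
    have "p + t *\<^sub>R y \<in> S"
      using assms(1,2) \<open>y \<in> S\<close> by (simp add: subspace_add subspace_scale)
    then have "dist v p \<le> dist v (p + t *\<^sub>R y)"
      by (rule nearest)
    then have "norm (v - p) \<le> norm ((v - p) - t *\<^sub>R y)"
      by (simp add: dist_norm diff_diff_eq)
    then have "inner (v - p) (v - p) \<le> inner ((v - p) - t *\<^sub>R y) ((v - p) - t *\<^sub>R y)"
      by (simp add: norm_le)
    also have "\<dots> = inner (v - p) (v - p) - (inner (v - p) y)\<^sup>2 / inner y y"
      using False by (simp add: t_def inner_diff_left inner_diff_right inner_commute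
          power2_eq_square)
    finally have "(inner (v - p) y)\<^sup>2 / inner y y \<le> 0" by simp
    then show ?thesis
      using False inner_gt_zero_iff[of y]
      by (auto simp: divide_le_0_iff inner_commute not_le[symmetric])
  qed simp
qed

lemma closed_subspace_orthogonal_decomposition:
  fixes S :: "'a::{real_inner,complete_space} set"
  assumes "closed S" "subspace S"
  shows "\<exists>p\<in>S. v - p \<in> S\<^sup>\<bottom>"
proof -
  have "S \<noteq> {}" using subspace_0[OF \<open>subspace S\<close>] by blast
  then obtain p where "p \<in> S" "\<And>x. x \<in> S \<Longrightarrow> dist v p \<le> dist v x"
    using nearest_point_exists[OF \<open>closed S\<close> subspace_imp_convex[OF \<open>subspace S\<close>]] by blast
  then show ?thesis using nearest_point_orthogonal[OF \<open>subspace S\<close>] by blast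
qed

definition orth_proj :: "'a::real_inner set \<Rightarrow> 'a \<Rightarrow> 'a" where
  "orth_proj S v = (SOME p. p \<in> S \<and> v - p \<in> S\<^sup>\<bottom>)"

context
  fixes S :: "'a::{real_inner,complete_space} set"
  assumes closed: "closed S" and subspace: "subspace S"
begin

lemma orth_proj_in: "orth_proj S v \<in> S"
  and orth_proj_orthogonal: "v - orth_proj S v \<in> S\<^sup>\<bottom>"
proof -
  have "\<exists>p. p \<in> S \<and> v - p \<in> S\<^sup>\<bottom>"
    using closed_subspace_orthogonal_decomposition[OF closed subspace] by blast
  from someI_ex[OF this] show "orth_proj S v \<in> S" "v - orth_proj S v \<in> S\<^sup>\<bottom>"
    unfolding orth_proj_def by blast+
qed

lemma orth_proj_unique:
  assumes "p \<in> S" "v - p \<in> S\<^sup>\<bottom>"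
  shows "orth_proj S v = p"
proof -
  have "orth_proj S v - p \<in> S"
    using orth_proj_in assms(1) subspace by (simp add: subspace_diff)
  moreover have "orth_proj S v - p \<in> S\<^sup>\<bottom>"
    using subspace_diff[OF subspace_orthogonal_comp assms(2) orth_proj_orthogonal, of v] by simp
  ultimately have "orth_proj S v - p = 0"
    using orthogonal_Int_0[OF subspace] by blast
  then show ?thesis by simp
qed

lemma orth_proj_id: "v \<in> S \<Longrightarrow> orth_proj S v = v"
  by (rule orth_proj_unique) (auto simp: orthogonal_comp_def orthogonal_def)

lemma orth_proj_eq_0_iff: "orth_proj S v = 0 \<longleftrightarrow> v \<in> S\<^sup>\<bottom>"
  using orth_proj_unique[of 0 v] orth_proj_orthogonal[of v] subspace_0[OF subspace] by auto

lemma bounded_linear_orth_proj: "bounded_linear (orth_proj S)"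
proof (rule bounded_linear_intro)
  fix x y
  show "orth_proj S (x + y) = orth_proj S x + orth_proj S y"
  proof (rule orth_proj_unique)
    show "orth_proj S x + orth_proj S y \<in> S"
      using orth_proj_in subspace by (simp add: subspace_add)
    show "x + y - (orth_proj S x + orth_proj S y) \<in> S\<^sup>\<bottom>"
      using subspace_add[OF subspace_orthogonal_comp orth_proj_orthogonal orth_proj_orthogonal, of x y]
      by (simp add: algebra_simps)
  qed
next
  fix r x
  show "orth_proj S (r *\<^sub>R x) = r *\<^sub>R orth_proj S x"
  proof (rule orth_proj_unique)
    show "r *\<^sub>R orth_proj S x \<in> S"
      using orth_proj_in subspace by (simp add: subspace_scale)
    show "r *\<^sub>R x - r *\<^sub>R orth_proj S x \<in> S\<^sup>\<bottom>"
      using subspace_scale[OF subspace_orthogonal_comp orth_proj_orthogonal, of r x]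
      by (simp add: scaleR_diff_right)
  qed
next
  fix x
  have "inner (orth_proj S x) (x - orth_proj S x) = 0"
    using orth_proj_in orth_proj_orthogonal by (simp add: orthogonal_comp_def orthogonal_def)
  then have "inner x x
      = inner (orth_proj S x) (orth_proj S x) + inner (x - orth_proj S x) (x - orth_proj S x)"
    by (simp add: inner_diff_left inner_diff_right inner_commute)
  then show "norm (orth_proj S x) \<le> norm x * 1"
    by (simp add: norm_le)
qed

lemma orthogonal_comp_nonzero_if_proper:
  assumes "S \<noteq> UNIV"
  obtains w where "w \<in> S\<^sup>\<bottom>" "w \<noteq> 0"
proof -
  obtain v where "v \<notin> S"
    using assms by blast
  then have "v - orth_proj S v \<noteq> 0"
    using orth_proj_in[of v] by auto
  then show ?thesis
    using that orth_proj_orthogonal by blast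
qed

lemma linear_eq_on_orthogonal_decomposition:
  assumes "linear f" "linear g"
    and "\<And>u. u \<in> S \<Longrightarrow> f u = g u" "\<And>q. q \<in> S\<^sup>\<bottom> \<Longrightarrow> f q = g q"
  shows "f v = g v"
proof -
  have "v = orth_proj S v + (v - orth_proj S v)"
    by simp
  then have "f v = f (orth_proj S v) + f (v - orth_proj S v)"
    and "g v = g (orth_proj S v) + g (v - orth_proj S v)"
    using linear_add[OF assms(1)] linear_add[OF assms(2)] by metis+
  then show ?thesis
    using assms(3,4) orth_proj_in orth_proj_orthogonal by simp
qed

lemma orthogonal_comp_invariant_if_commute_orth_proj:
  assumes "linear z" "z \<circ> orth_proj S = orth_proj S \<circ> z" "q \<in> S\<^sup>\<bottom>"
  shows "z q \<in> S\<^sup>\<bottom>"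
proof -
  have "orth_proj S (z q) = z (orth_proj S q)"
    using assms(2) by (metis comp_apply)
  also have "\<dots> = 0"
    using assms(3) linear_0[OF assms(1)] orth_proj_eq_0_iff by metis
  finally show ?thesis
    using orth_proj_eq_0_iff by blast
qed

end

lemma cscale_add_left: "cscale J (a + b) x = cscale J a x + cscale J b x"
  by (simp add: cscale_def algebra_simps)

lemma cscale_diff_left: "cscale J (a - b) x = cscale J a x - cscale J b x"
  by (simp add: cscale_def algebra_simps)

lemma cscale_zero_left [simp]: "cscale J 0 x = 0"
  by (simp add: cscale_def)

lemma cscale_one [simp]: "cscale J 1 x = x"
  by (simp add: cscale_def)

lemma cscale_of_real: "cscale J (of_real r) x = r *\<^sub>R x"
  by (simp add: cscale_def)

lemma bops_linear: "T \<in> bops J \<Longrightarrow> linear T"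
  by (simp add: bops_def bounded_linear.linear)

lemma bops_cscale: "T \<in> bops J \<Longrightarrow> T (cscale J c x) = cscale J c (T x)"
  using bops_linear[of T J] by (simp add: bops_def cscale_def linear_add linear_scale)

text \<open>The complex inner product, recovered from its real part; it is complex-linear in
  its second argument.\<close>
definition cinner :: "('a::real_inner \<Rightarrow> 'a) \<Rightarrow> 'a \<Rightarrow> 'a \<Rightarrow> complex" where
  "cinner J w v = Complex (inner w v) (inner (J w) v)"

definition rank_one :: "('a::real_inner \<Rightarrow> 'a) \<Rightarrow> 'a \<Rightarrow> 'a \<Rightarrow> 'a \<Rightarrow> 'a" where
  "rank_one J u w = (\<lambda>v. cscale J (cinner J w v) u)"

definition commutator :: "('a \<Rightarrow> 'a::ab_group_add) \<Rightarrow> ('a \<Rightarrow> 'a) \<Rightarrow> 'a \<Rightarrow> 'a" where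
  "commutator a y = (\<lambda>v. a (y v) - y (a v))"

definition center :: "('a \<Rightarrow> 'a) set \<Rightarrow> ('a \<Rightarrow> 'a) set" where
  "center A = {z \<in> A. \<forall>T\<in>A. z \<circ> T = T \<circ> z}"

locale complex_inner =
  fixes J :: "'a::real_inner \<Rightarrow> 'a"
  assumes complex_structure: "complex_structure J"
begin

lemma linear_J: "linear J"
  using complex_structure by (simp add: complex_structure_def)

lemma J_J [simp]: "J (J x) = - x"
  using complex_structure by (simp add: complex_structure_def)

lemma inner_J_J [simp]: "inner (J x) (J y) = inner x y"
  using complex_structure by (simp add: complex_structure_def)

lemma J_add [simp]: "J (x + y) = J x + J y"
  and J_diff [simp]: "J (x - y) = J x - J y"
  and J_scaleR [simp]: "J (r *\<^sub>R x) = r *\<^sub>R J x"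
  and J_0 [simp]: "J 0 = 0"
  using linear_add linear_diff linear_scale linear_0 linear_J by blast+

lemma inner_J_left: "inner (J x) y = - inner x (J y)"
  using inner_J_J[of "J x" y] by simp

lemma inner_J_self [simp]: "inner (J x) x = 0"
  using inner_J_left[of x x] by (simp add: inner_commute)

lemma cscale_cscale [simp]: "cscale J a (cscale J b x) = cscale J (a * b) x"
  by (simp add: cscale_def algebra_simps)

lemma J_cscale: "J (cscale J c x) = cscale J c (J x)"
  by (simp add: cscale_def)

lemma linear_cscale: "linear (cscale J c)"
  by (auto intro!: linearI simp: cscale_def algebra_simps)

lemma cscale_eq_0_iff [simp]: "cscale J c x = 0 \<longleftrightarrow> c = 0 \<or> x = 0"
proof
  assume "cscale J c x = 0"
  then have "cscale J (cnj c * c) x = 0"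
    by (metis cscale_cscale cscale_def J_0 scaleR_zero_right add_0)
  moreover have "cnj c * c = of_real ((cmod c)\<^sup>2)"
    by (metis complex_norm_square mult.commute of_real_power)
  ultimately have "(cmod c)\<^sup>2 *\<^sub>R x = 0"
    by (metis cscale_of_real)
  then show "c = 0 \<or> x = 0" by simp
qed (auto simp: cscale_def)

lemma cscale_cancel_right: "cscale J a x = cscale J b x \<longleftrightarrow> a = b \<or> x = 0"
  by (metis cscale_diff_left cscale_eq_0_iff eq_iff_diff_eq_0)

lemma cinner_J_right: "cinner J w (J v) = \<i> * cinner J w v"
  by (simp add: cinner_def complex_eq_iff inner_J_left)

lemma cinner_add_right: "cinner J w (x + y) = cinner J w x + cinner J w y"
  and cinner_diff_right: "cinner J w (x - y) = cinner J w x - cinner J w y"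
  by (simp_all add: cinner_def complex_eq_iff inner_add_right inner_diff_right)

lemma cinner_cscale_right: "cinner J w (cscale J c v) = c * cinner J w v"
  by (simp add: cscale_def cinner_add_right cinner_J_right)
    (simp add: cinner_def complex_eq_iff inner_J_left)

lemma cinner_self: "cinner J w w = of_real (inner w w)"
  by (simp add: cinner_def complex_eq_iff)

lemma cinner_orthogonal_comp:
  assumes "w \<in> M\<^sup>\<bottom>" "v \<in> M" "J v \<in> M"
  shows "cinner J w v = 0"
proof -
  have "inner v w = 0" "inner (J v) w = 0"
    using assms by (auto simp: orthogonal_comp_def orthogonal_def)
  moreover have "inner (J w) v = - inner (J v) w"
    using inner_J_left[of w v] by (simp add: inner_commute)
  ultimately show ?thesis
    by (simp add: cinner_def complex_eq_iff inner_commute)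
qed

lemma J_orthogonal_comp:
  assumes "\<And>x. x \<in> M \<Longrightarrow> J x \<in> M" "q \<in> M\<^sup>\<bottom>"
  shows "J q \<in> M\<^sup>\<bottom>"
  unfolding orthogonal_comp_def orthogonal_def
proof (intro CollectI ballI)
  fix y assume "y \<in> M"
  then have "inner (J y) q = 0"
    using assms by (auto simp: orthogonal_comp_def orthogonal_def)
  then show "inner y (J q) = 0"
    by (simp add: inner_J_left)
qed

lemma rank_one_bops: "rank_one J u w \<in> bops J"
proof -
  have "rank_one J u w = (\<lambda>v. inner w v *\<^sub>R u + inner (J w) v *\<^sub>R J u)"
    by (simp add: rank_one_def cscale_def cinner_def)
  then have "bounded_linear (rank_one J u w)"
    by (auto intro!: bounded_linear_intros)
  moreover have "rank_one J u w (J v) = J (rank_one J u w v)" for v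
    by (simp add: rank_one_def cinner_J_right J_cscale cscale_def)
  ultimately show ?thesis by (simp add: bops_def)
qed

lemma rank_one_commute_eq:
  assumes "z \<in> bops J" "z \<circ> rank_one J u w = rank_one J u w \<circ> z"
  shows "cscale J (cinner J w v) (z u) = cscale J (cinner J w (z v)) u"
  using fun_cong[OF assms(2), of v] bops_cscale[OF assms(1)] by (simp add: rank_one_def)

lemma rank_one_commute_eigenvector:
  assumes "z \<in> bops J" "z \<circ> rank_one J u w = rank_one J u w \<circ> z" "w \<noteq> 0"
  shows "z u = cscale J (cinner J w (z w) / of_real (inner w w)) u"
proof -
  have "cscale J (of_real (inner w w)) (z u) = cscale J (cinner J w (z w)) u"
    using rank_one_commute_eq[OF assms(1,2), of w] by (simp add: cinner_self)
  then have "cscale J (1 / of_real (inner w w)) (cscale J (of_real (inner w w)) (z u))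
      = cscale J (1 / of_real (inner w w)) (cscale J (cinner J w (z w)) u)"
    by simp
  then show ?thesis using assms(3) by simp
qed

lemma commute_if_commutators_scalar:
  assumes "a \<in> bops J" "y \<in> bops J"
    and l: "commutator a y = cscale J l" and m: "commutator a (y \<circ> y) = cscale J m"
  shows "a \<circ> y = y \<circ> a"
proof (cases "l = 0")
  case True
  then show ?thesis
    using l by (simp add: commutator_def fun_eq_iff)
next
  case False
  have y_scalar: "y v = cscale J (m / (2 * l)) v" for v
  proof -
    have "cscale J m v = commutator a y (y v) + y (commutator a y v)"
      using fun_cong[OF m, of v] linear_diff[OF bops_linear[OF assms(2)]]
      by (simp add: commutator_def)
    also have "\<dots> = cscale J (2 * l) (y v)"
      unfolding l bops_cscale[OF assms(2)] mult_2 cscale_add_left ..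
    finally have "cscale J (1 / (2 * l)) (cscale J m v)
        = cscale J (1 / (2 * l)) (cscale J (2 * l) (y v))"
      by (rule arg_cong)
    then show ?thesis
      using False by simp
  qed
  show ?thesis
    using y_scalar bops_cscale[OF assms(1)] by (simp add: fun_eq_iff)
qed

end

lemma alg_clinear_add:
  "alg_clinear J A f \<Longrightarrow> x \<in> A \<Longrightarrow> y \<in> A \<Longrightarrow> f (\<lambda>v. x v + y v) = (\<lambda>v. f x v + f y v)"
  by (simp add: alg_clinear_def)

locale operator_algebra = complex_inner J for J :: "'a::real_inner \<Rightarrow> 'a" +
  fixes A :: "('a \<Rightarrow> 'a) set"
  assumes subset_bops: "A \<subseteq> bops J"
    and id_mem: "id \<in> A"
    and comp_mem: "x \<in> A \<Longrightarrow> y \<in> A \<Longrightarrow> x \<circ> y \<in> A"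
    and add_mem: "x \<in> A \<Longrightarrow> y \<in> A \<Longrightarrow> (\<lambda>v. x v + y v) \<in> A"
    and diff_mem: "x \<in> A \<Longrightarrow> y \<in> A \<Longrightarrow> (\<lambda>v. x v - y v) \<in> A"
begin

lemma linear_mem: "x \<in> A \<Longrightarrow> linear x"
  using subset_bops bops_linear by blast

lemma jprod_mem: "x \<in> A \<Longrightarrow> y \<in> A \<Longrightarrow> jprod x y \<in> A"
  using add_mem[OF comp_mem comp_mem] by (simp add: jprod_def)

lemma commutator_mem: "a \<in> A \<Longrightarrow> y \<in> A \<Longrightarrow> commutator a y \<in> A"
  using diff_mem[OF comp_mem comp_mem] by (simp add: commutator_def)

lemma Cent_subset_JCent: "Cent J A \<subseteq> JCent J A"
proof
  fix f assume f: "f \<in> Cent J A"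
  have "f (jprod x y) = jprod (f x) y" if x: "x \<in> A" and y: "y \<in> A" for x y
  proof -
    have "f (jprod x y) = (\<lambda>v. f (x \<circ> y) v + f (y \<circ> x) v)"
      using alg_clinear_add[of J A f, OF _ comp_mem[OF x y] comp_mem[OF y x]] f
      by (simp add: Cent_def jprod_def)
    moreover have "f (x \<circ> y) = f x \<circ> y" "f (y \<circ> x) = y \<circ> f x"
      using f x y unfolding Cent_def by blast+
    ultimately show ?thesis
      by (simp add: jprod_def)
  qed
  then show "f \<in> JCent J A"
    using f by (simp add: Cent_def JCent_def)
qed

lemma JCent_double:
  assumes "f \<in> JCent J A" "y \<in> A"
  shows "f y v + f y v = f id (y v) + y (f id v)"
proof -
  have "f (jprod id y) = jprod (f id) y"
    using assms id_mem by (simp add: JCent_def)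
  moreover have "f (jprod id y) = (\<lambda>v. f y v + f y v)"
    using alg_clinear_add[of J A f y y] assms by (simp add: JCent_def jprod_def)
  ultimately show ?thesis
    by (simp add: jprod_def fun_eq_iff)
qed

lemma JCent_commutator_mem_center:
  assumes f: "f \<in> JCent J A" and y: "y \<in> A"
  shows "commutator (f id) y \<in> center A"
proof -
  let ?a = "f id"
  have a: "?a \<in> A"
    using f id_mem by (simp add: JCent_def alg_clinear_def)
  have "commutator ?a y (x v) = x (commutator ?a y v)" if x: "x \<in> A" for x v
  proof -
    have "f (jprod x y) v + f (jprod x y) v = jprod (f x) y v + jprod (f x) y v"
      using f x y by (simp add: JCent_def)
    then have "?a (jprod x y v) + jprod x y (?a v) = (f x (y v) + f x (y v)) + y (f x v + f x v)"
      using JCent_double[OF f jprod_mem[OF x y]] linear_add[OF linear_mem[OF y]]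
      by (simp add: jprod_def algebra_simps)
    also have "\<dots> = (?a (x (y v)) + x (?a (y v))) + y (?a (x v) + x (?a v))"
      using JCent_double[OF f x] by simp
    finally show ?thesis
      using linear_add[OF linear_mem[OF a]] linear_add[OF linear_mem[OF y]]
      by (simp add: jprod_def commutator_def linear_diff[OF linear_mem[OF x]] algebra_simps)
  qed
  then show ?thesis
    using commutator_mem[OF a y] by (auto simp: center_def fun_eq_iff)
qed

lemma JCent_subset_Cent:
  assumes center_scalar: "center A \<subseteq> range (cscale J)"
  shows "JCent J A \<subseteq> Cent J A"
proof
  fix f assume f: "f \<in> JCent J A"
  define a where "a = f id"
  have a: "a \<in> A"
    using f id_mem by (simp add: a_def JCent_def alg_clinear_def)
  have commute: "a (y v) = y (a v)" if y: "y \<in> A" for y v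
  proof -
    obtain l where "commutator a y = cscale J l"
      using JCent_commutator_mem_center[OF f y] center_scalar by (auto simp: a_def)
    moreover obtain m where "commutator a (y \<circ> y) = cscale J m"
      using JCent_commutator_mem_center[OF f comp_mem[OF y y]] center_scalar by (auto simp: a_def)
    ultimately have "a \<circ> y = y \<circ> a"
      using commute_if_commutators_scalar subset_bops a y by blast
    then show ?thesis by (metis comp_apply)
  qed
  have f_eq: "f y v = a (y v)" if y: "y \<in> A" for y v
  proof -
    have "2 *\<^sub>R f y v = 2 *\<^sub>R a (y v)"
      using JCent_double[OF f y, of v] commute[OF y] by (simp add: a_def scaleR_2)
    then show ?thesis by simp
  qed
  show "f \<in> Cent J A"
    using f by (simp add: Cent_def JCent_def f_eq comp_mem commute fun_eq_iff)
qed

theorem JCent_eq_Cent_if_center_scalar: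
  "center A \<subseteq> range (cscale J) \<Longrightarrow> JCent J A = Cent J A"
  using JCent_subset_Cent Cent_subset_JCent by blast

end

locale nest_space = complex_inner J for J :: "'a::{real_inner,complete_space} \<Rightarrow> 'a" +
  fixes \<N> :: "'a set set"
  assumes nest: "nest J \<N>"
begin

lemma nest_memD:
  assumes "M \<in> \<N>"
  shows "closed M" and "subspace M" and "\<And>x. x \<in> M \<Longrightarrow> J x \<in> M"
  using nest assms by (auto simp: nest_def csubspace_def)

lemma nest_chain: "M \<in> \<N> \<Longrightarrow> L \<in> \<N> \<Longrightarrow> M \<subseteq> L \<or> L \<subseteq> M"
  using nest by (simp add: nest_def)

lemma nest_mem_cscale: "M \<in> \<N> \<Longrightarrow> x \<in> M \<Longrightarrow> cscale J c x \<in> M"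
  unfolding cscale_def using nest_memD by (metis subspace_add subspace_scale)

sublocale operator_algebra J "nest_algebra J \<N>"
proof unfold_locales
  show "nest_algebra J \<N> \<subseteq> bops J"
    by (auto simp: nest_algebra_def)
  show "id \<in> nest_algebra J \<N>"
    by (auto simp: nest_algebra_def bops_def bounded_linear_ident[unfolded id_def[symmetric]])
  fix x y assume "x \<in> nest_algebra J \<N>" "y \<in> nest_algebra J \<N>"
  then show "x \<circ> y \<in> nest_algebra J \<N>"
    and "(\<lambda>v. x v + y v) \<in> nest_algebra J \<N>"
    and "(\<lambda>v. x v - y v) \<in> nest_algebra J \<N>"
    using nest_memD(2)
    by (auto simp: nest_algebra_def bops_def comp_def bounded_linear_compose bounded_linear_add
        bounded_linear_sub image_subset_iff subspace_add subspace_diff)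
qed

lemma rank_one_mem_nest_algebra:
  assumes "\<And>M. M \<in> \<N> \<Longrightarrow> u \<in> M \<or> w \<in> M\<^sup>\<bottom>"
  shows "rank_one J u w \<in> nest_algebra J \<N>"
proof -
  have "rank_one J u w ` M \<subseteq> M" if M: "M \<in> \<N>" for M
  proof (cases "u \<in> M")
    case True
    then show ?thesis
      using nest_mem_cscale[OF M] by (auto simp: rank_one_def)
  next
    case False
    then have "cinner J w v = 0" if "v \<in> M" for v
      using assms[OF M] cinner_orthogonal_comp nest_memD(3)[OF M] that by blast
    then show ?thesis
      using subspace_0[OF nest_memD(2)[OF M]] by (auto simp: rank_one_def)
  qed
  then show ?thesis
    using rank_one_bops by (simp add: nest_algebra_def)
qed

lemma rank_one_mem_nest_algebra_orthogonal_comp: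
  assumes "N \<in> \<N>" "u \<in> N" "w \<in> N\<^sup>\<bottom>"
  shows "rank_one J u w \<in> nest_algebra J \<N>"
proof (rule rank_one_mem_nest_algebra)
  fix M assume "M \<in> \<N>"
  then consider "N \<subseteq> M" | "M \<subseteq> N"
    using nest_chain assms(1) by blast
  then show "u \<in> M \<or> w \<in> M\<^sup>\<bottom>"
    using assms(2,3) orthogonal_comp_anti_mono by cases blast+
qed

lemma orth_proj_mem_nest_algebra:
  assumes "N \<in> \<N>"
  shows "orth_proj N \<in> nest_algebra J \<N>"
proof -
  note N = nest_memD[OF assms]
  have "orth_proj N (J x) = J (orth_proj N x)" for x
  proof (rule orth_proj_unique[OF N(1,2)])
    show "J (orth_proj N x) \<in> N"
      using N(3) orth_proj_in[OF N(1,2)] by blast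
    show "J x - J (orth_proj N x) \<in> N\<^sup>\<bottom>"
      using J_orthogonal_comp[OF N(3) orth_proj_orthogonal[OF N(1,2)], of x] by simp
  qed
  moreover have "orth_proj N ` M \<subseteq> M" if M: "M \<in> \<N>" for M
  proof (cases "N \<subseteq> M")
    case True
    then show ?thesis
      using orth_proj_in[OF N(1,2)] by blast
  next
    case False
    then have "M \<subseteq> N"
      using nest_chain[OF assms M] by blast
    then show ?thesis
      using orth_proj_id[OF N(1,2)] by auto
  qed
  ultimately show ?thesis
    using bounded_linear_orth_proj[OF N(1,2)] by (simp add: nest_algebra_def bops_def)
qed

lemma center_nest_algebraD:
  assumes "z \<in> center (nest_algebra J \<N>)"
  shows "z \<in> bops J" and "\<And>T. T \<in> nest_algebra J \<N> \<Longrightarrow> z \<circ> T = T \<circ> z"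
  using assms by (auto simp: center_def nest_algebra_def)

lemma center_nest_algebra_scalar_if_trivial:
  assumes "\<N> \<subseteq> {{0}, UNIV}" "z \<in> center (nest_algebra J \<N>)"
  shows "z \<in> range (cscale J)"
proof (cases "\<exists>w::'a. w \<noteq> 0")
  case True
  then obtain w :: 'a where "w \<noteq> 0" by blast
  have "rank_one J u w \<in> nest_algebra J \<N>" for u
    using assms(1) by (intro rank_one_mem_nest_algebra) auto
  then have "z u = cscale J (cinner J w (z w) / of_real (inner w w)) u" for u
    using center_nest_algebraD[OF assms(2)] \<open>w \<noteq> 0\<close> by (intro rank_one_commute_eigenvector) auto
  then show ?thesis
    by (metis rangeI ext)
next
  case False
  then have "z = cscale J 0"
    by auto
  then show ?thesis by simp
qed

lemma center_nest_algebra_scalar_on_orthogonal_comp: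
  assumes "N \<in> \<N>" "z \<in> center (nest_algebra J \<N>)"
    and "u \<in> N" "u \<noteq> 0" "z u = cscale J l u" and q: "q \<in> N\<^sup>\<bottom>"
  shows "z q = cscale J l q"
proof -
  note N = nest_memD[OF assms(1)] and z = center_nest_algebraD[OF assms(2)]
  have cinner_z: "cinner J w (z q) = l * cinner J w q" if "w \<in> N\<^sup>\<bottom>" for w
    using rank_one_commute_eq[OF z(1) z(2)[OF rank_one_mem_nest_algebra_orthogonal_comp[OF assms(1,3) that]]]
      assms(4,5)
    by (simp add: cscale_cancel_right mult.commute)
  have "z q \<in> N\<^sup>\<bottom>"
    using orthogonal_comp_invariant_if_commute_orth_proj[OF N(1,2) bops_linear[OF z(1)]
        z(2)[OF orth_proj_mem_nest_algebra[OF assms(1)]] q] .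
  moreover have "cscale J l q \<in> N\<^sup>\<bottom>"
    using J_orthogonal_comp[OF N(3) q] q subspace_orthogonal_comp[of N]
    by (simp add: cscale_def subspace_add subspace_scale)
  ultimately have "z q - cscale J l q \<in> N\<^sup>\<bottom>"
    using subspace_diff[OF subspace_orthogonal_comp] by blast
  then have "cinner J (z q - cscale J l q) (z q - cscale J l q) = 0"
    using cinner_z by (simp add: cinner_diff_right cinner_cscale_right)
  then show ?thesis
    by (simp add: cinner_self)
qed

lemma center_nest_algebra_scalar_if_proper_mem:
  assumes N: "N \<in> \<N>" "N \<noteq> {0}" "N \<noteq> UNIV" and z: "z \<in> center (nest_algebra J \<N>)"
  shows "z \<in> range (cscale J)"
proof -
  note N' = nest_memD[OF N(1)] and z' = center_nest_algebraD[OF z]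
  obtain w where w: "w \<in> N\<^sup>\<bottom>" "w \<noteq> 0"
    using orthogonal_comp_nonzero_if_proper[OF N'(1,2) N(3)] by blast
  obtain u where u: "u \<in> N" "u \<noteq> 0"
    using N(2) subspace_0[OF N'(2)] by blast
  define l where "l = cinner J w (z w) / of_real (inner w w)"
  have on_N: "z x = cscale J l x" if "x \<in> N" for x
    unfolding l_def
    using z' rank_one_mem_nest_algebra_orthogonal_comp[OF N(1) that w(1)] w(2)
    by (intro rank_one_commute_eigenvector) auto
  have "z v = cscale J l v" for v
  proof (rule linear_eq_on_orthogonal_decomposition[OF N'(1,2) bops_linear[OF z'(1)] linear_cscale])
    show "z x = cscale J l x" if "x \<in> N" for x
      using on_N[OF that] .
    show "z q = cscale J l q" if "q \<in> N\<^sup>\<bottom>" for q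
      using center_nest_algebra_scalar_on_orthogonal_comp[OF N(1) z u on_N[OF u(1)] that] .
  qed
  then show ?thesis
    by (metis rangeI ext)
qed

theorem center_nest_algebra_scalar: "center (nest_algebra J \<N>) \<subseteq> range (cscale J)"
proof
  fix z assume "z \<in> center (nest_algebra J \<N>)"
  then show "z \<in> range (cscale J)"
    using center_nest_algebra_scalar_if_trivial center_nest_algebra_scalar_if_proper_mem by blast
qed

end

theorem corollary3p9:
  fixes J :: "'a::{real_inner, complete_space} \<Rightarrow> 'a"
    and \<N> :: "'a set set"
  assumes "complex_structure J"
    and "cdim_ge_2 J"
    and "nest J \<N>"
  shows "JCent J (nest_algebra J \<N>) = Cent J (nest_algebra J \<N>)"
proof -
  interpret nest_space J \<N>
    using assms(1,3) by (simp add: nest_space_def complex_inner_def nest_space_axioms_def)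
  show ?thesis
    by (rule JCent_eq_Cent_if_center_scalar[OF center_nest_algebra_scalar])
qed

end
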